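(* Let $K$ be a field of characteristic $0$, $W_n=K[x_1,\dots,x_n]\langle D_{x_1},\dots,D_{x_n}\rangle$ the Weyl algebra, and $S\subseteq\{1,\dots,n\}$ non-empty. For each $j\in S$ let $L_j=\sum_{k=0}^{r_j}\ell_{j,k}D_{x_j}^k\in K[x_1,\dots,x_n]\langle D_{x_j}\rangle$ with $\ell_{j,r_j}\ne0$ and $\max_k\operatorname{tdeg}(\ell_{j,k})=d_j$. Define $C=\operatorname{lcm}_{j\in S}(\ell_{j,r_j})$, $\tilde L_j=(C/\ell_{j,r_j})L_j$, $d_C=\sum_{j\in S}d_j$, $B=\prod_{j\in S}\{0,1,\dots,r_j-1\}\subseteq\mathbb N^S$, $J=\sum_{j\in S}W_n\tilde L_j$, and for $d\in\mathbb N$, $r\in\mathbb Z$, $$\mathcal H_{d,r}=\bigoplus_{\beta\in\mathbb N^S:\ |\beta|\le r\ \text{or}\ \beta\in B}K[x_1,\dots,x_n]_{\le d}\,D_S^\beta,\qquad D_S^\beta=\prod_{j\in S}D_{x_j}^{\beta_j}.$$ Then for all $u,t\in\mathbb N$ and $v\in\mathbb Z$ with $u\ge v$, one has $C^u\mathcal H_{t,v}\subseteq\mathcal H_{t+ud_C,0}+J$. In particular, for every $\alpha\in\mathbb N^S$, $C^{|\alpha|}D_S^\alpha\in\mathcal H_{|\alpha|d_C,0}+J$.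
   Context: $K[x_1,\dots,x_n]_{\le d}$ denotes the polynomials of total degree at most $d$; in $\mathcal H_{d,r}$ polynomial coefficients are written to the left of the monomials $D_S^\beta$. $C^u\mathcal H_{t,v}$ denotes the set of products $C^uh$ in $W_n$ with $h\in\mathcal H_{t,v}$; $J$ is the left ideal of $W_n$ generated by the $\tilde L_j$, $j\in S$. $\operatorname{tdeg}$ is total degree. *)

theory Defs
  imports "HOL-Library.Poly_Mapping"
begin

text \<open>Monomials are exponent vectors; index i (1 \<le> i \<le> n) stands for x_i resp. D_{x_i}.\<close>
type_synonym monom = "nat \<Rightarrow>\<^sub>0 nat"

type_synonym 'k mpoly = "monom \<Rightarrow>\<^sub>0 'k"

text \<open>Weyl algebra elements in normal form: sum of c * x^a D^b, coefficients on the left.\<close>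
type_synonym 'k weyl = "(monom \<times> monom) \<Rightarrow>\<^sub>0 'k"

definition mdeg :: "monom \<Rightarrow> nat" where
  "mdeg a = (\<Sum>i\<in>Poly_Mapping.keys a. Poly_Mapping.lookup a i)"

definition tdeg :: "'k::zero mpoly \<Rightarrow> nat" where
  "tdeg p = Max (insert 0 (mdeg ` Poly_Mapping.keys p))"

definition is_poly_n :: "nat \<Rightarrow> 'k::zero mpoly \<Rightarrow> bool" where
  "is_poly_n n p \<longleftrightarrow> (\<forall>a\<in>Poly_Mapping.keys p. Poly_Mapping.keys a \<subseteq> {1..n})"

definition in_Wn :: "nat \<Rightarrow> 'k::zero weyl \<Rightarrow> bool" where
  "in_Wn n w \<longleftrightarrow> (\<forall>(a,b)\<in>Poly_Mapping.keys w. Poly_Mapping.keys a \<subseteq> {1..n} \<and> Poly_Mapping.keys b \<subseteq> {1..n})"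

text \<open>Product of normal monomials:
  (x^a D^b)(x^c D^e) = \<Sum>_k \<Prod>_i C(b_i,k_i) C(c_i,k_i) k_i! x^(a+c-k) D^(b+e-k),
  which is the Leibniz rule D^b x^c = \<Sum>_k C(b,k) c!/(c-k)! x^(c-k) D^(b-k).\<close>
definition weyl_mono_mult :: "monom \<times> monom \<Rightarrow> monom \<times> monom \<Rightarrow> 'k::field_char_0 weyl" where
  "weyl_mono_mult m m' = (case m of (a,b) \<Rightarrow> case m' of (c,e) \<Rightarrow>
     (\<Sum>k\<in>{k. \<forall>i. Poly_Mapping.lookup k i \<le> Poly_Mapping.lookup b i \<and> Poly_Mapping.lookup k i \<le> Poly_Mapping.lookup c i}.
        Poly_Mapping.single (a + c - k, b + e - k)
          (\<Prod>i\<in>Poly_Mapping.keys k. of_nat ((Poly_Mapping.lookup b i choose Poly_Mapping.lookup k i) * (Poly_Mapping.lookup c i choose Poly_Mapping.lookup k i)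
                                  * fact (Poly_Mapping.lookup k i)))))"

definition weyl_mult :: "'k::field_char_0 weyl \<Rightarrow> 'k weyl \<Rightarrow> 'k weyl" where
  "weyl_mult p q = (\<Sum>m\<in>Poly_Mapping.keys p. \<Sum>m'\<in>Poly_Mapping.keys q.
      Poly_Mapping.map (\<lambda>c. Poly_Mapping.lookup p m * Poly_Mapping.lookup q m' * c) (weyl_mono_mult m m'))"

definition poly_D :: "'k::zero mpoly \<Rightarrow> monom \<Rightarrow> 'k weyl" where
  "poly_D p \<beta> = Abs_poly_mapping (\<lambda>(a,b). if b = \<beta> then Poly_Mapping.lookup p a else 0)"

definition poly_to_weyl :: "'k::zero mpoly \<Rightarrow> 'k weyl" where
  "poly_to_weyl p = poly_D p 0"

definition poly_quot :: "'k::field mpoly \<Rightarrow> 'k mpoly \<Rightarrow> 'k mpoly" where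
  "poly_quot c l = (THE q. c = q * l)"

definition is_lcm_n :: "nat \<Rightarrow> 'k::field mpoly \<Rightarrow> 'a set \<Rightarrow> ('a \<Rightarrow> 'k mpoly) \<Rightarrow> bool" where
  "is_lcm_n n C S f \<longleftrightarrow> is_poly_n n C \<and> (\<forall>j\<in>S. f j dvd C) \<and>
     (\<forall>M. is_poly_n n M \<and> (\<forall>j\<in>S. f j dvd M) \<longrightarrow> C dvd M)"

definition Lop :: "(nat \<Rightarrow> nat \<Rightarrow> 'k::comm_monoid_add mpoly) \<Rightarrow> (nat \<Rightarrow> nat) \<Rightarrow> nat \<Rightarrow> 'k weyl" where
  "Lop l r j = (\<Sum>k\<le>r j. poly_D (l j k) (Poly_Mapping.single j k))"

text \<open>Hcal n S r d rr = H_{d,rr}: elements \<Sum> p_beta D_S^beta with p_beta \<in> K[x_1..x_n]_{\<le>d},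
  beta \<in> N^S with |beta| \<le> rr or beta \<in> B = \<Prod>_{j\<in>S} {0..r_j-1}.\<close>
definition Hcal :: "nat \<Rightarrow> nat set \<Rightarrow> (nat \<Rightarrow> nat) \<Rightarrow> nat \<Rightarrow> int \<Rightarrow> 'k::zero weyl set" where
  "Hcal n S r d rr = {h. \<forall>(a,b)\<in>Poly_Mapping.keys h. Poly_Mapping.keys a \<subseteq> {1..n} \<and> mdeg a \<le> d \<and> Poly_Mapping.keys b \<subseteq> S \<and>
      (int (mdeg b) \<le> rr \<or> (\<forall>j\<in>S. Poly_Mapping.lookup b j < r j))}"

definition left_ideal_gen :: "nat \<Rightarrow> nat set \<Rightarrow> (nat \<Rightarrow> 'k::field_char_0 weyl) \<Rightarrow> 'k weyl set" where
  "left_ideal_gen n S G = {\<Sum>j\<in>S. weyl_mult (w j) (G j) | w. \<forall>j\<in>S. in_Wn n (w j)}"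

end

theory Submission
  imports Defs "HOL-Library.Set_Algebras"
begin

(* Take a monomial x^a D^beta of H_{t,v} that does not lie in H_{t,0}. Then beta_j >= r_j for
   some j in S, so D^beta = D^gamma D_j^(r_j), and C = q_j l_{j,r_j} with q_j = C / l_{j,r_j}.
   The Leibniz rule gives
     C x^a D^beta = x^a D^gamma Lt_j - (sum over k < r_j of x^a D^gamma q_j l_{j,k} D_j^k) + R,
   where R collects the terms in which derivatives from D^gamma hit C. Both error terms have
   D-order below |beta| and x-degree at most t + d_C, because deg C <= d_C and
   deg (q_j l_{j,k}) <= d_C: C divides the product of the l_{j,r_j}, and weighted degrees are
   additive on products of nonzero polynomials. (The same additivity, for the weight counting
   the variables other than x_1..x_n, shows that q_j lies in K[x_1..x_n].) So each factor C
   lowers the D-order by one modulo J at the cost of d_C in x-degree, and induction on u gives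
   the claim. *)

abbreviation lookup :: "('a \<Rightarrow>\<^sub>0 'b::zero) \<Rightarrow> 'a \<Rightarrow> 'b"
  where "lookup \<equiv> Poly_Mapping.lookup"

abbreviation keys :: "('a \<Rightarrow>\<^sub>0 'b::zero) \<Rightarrow> 'a set"
  where "keys \<equiv> Poly_Mapping.keys"

abbreviation single :: "'a \<Rightarrow> 'b::zero \<Rightarrow> 'a \<Rightarrow>\<^sub>0 'b"
  where "single \<equiv> Poly_Mapping.single"

section \<open>Weighted degrees of monomials and polynomials\<close>

definition monom_weight :: "(nat \<Rightarrow> nat) \<Rightarrow> monom \<Rightarrow> nat" where
  "monom_weight w a = (\<Sum>i\<in>keys a. w i * lookup a i)"

lemma monom_weight_add: "monom_weight w (a + b) = monom_weight w a + monom_weight w b"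
  unfolding monom_weight_def by (rule setsum_keys_plus_distrib) (simp_all add: distrib_left)

lemma monom_weight_zero [simp]: "monom_weight w 0 = 0"
  by (simp add: monom_weight_def)

lemma monom_weight_mono:
  assumes "\<And>i. lookup a i \<le> lookup b i"
  shows "monom_weight w a \<le> monom_weight w b"
proof -
  have "keys a \<subseteq> keys b"
    by (metis assms in_keys_iff le_zero_eq subsetI)
  then have "monom_weight w a = (\<Sum>i\<in>keys b. w i * lookup a i)"
    unfolding monom_weight_def by (intro sum.mono_neutral_left) (auto simp: in_keys_iff)
  also have "\<dots> \<le> monom_weight w b"
    unfolding monom_weight_def by (intro sum_mono mult_left_mono assms) simp
  finally show ?thesis .
qed

lemma mdeg_eq_monom_weight: "mdeg = monom_weight (\<lambda>_. 1)"
  by (simp add: fun_eq_iff mdeg_def monom_weight_def)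

lemma mdeg_add: "mdeg (a + b) = mdeg a + mdeg b"
  by (simp add: mdeg_eq_monom_weight monom_weight_add)

lemma mdeg_mono: "(\<And>i. lookup a i \<le> lookup b i) \<Longrightarrow> mdeg a \<le> mdeg b"
  unfolding mdeg_eq_monom_weight by (rule monom_weight_mono)

lemma mdeg_single [simp]: "mdeg (single i k) = k"
  by (simp add: mdeg_def)

lemma mdeg_eq_0_iff: "mdeg a = 0 \<longleftrightarrow> a = 0"
  by (auto simp: mdeg_def in_keys_iff intro: poly_mapping_eqI)

lemma monom_diff_add: "(\<And>i. lookup k i \<le> lookup a i) \<Longrightarrow> a - k + k = (a :: monom)"
  by (rule poly_mapping_eqI) (simp add: lookup_add lookup_minus)

lemma keys_monom_diff: "keys (a - b :: monom) \<subseteq> keys a"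
  by (auto simp: in_keys_iff lookup_minus)

lemma lookup_le_mdeg: "lookup a i \<le> mdeg a"
  using mdeg_mono[of "single i (lookup a i)" a] by (simp add: lookup_single when_def)

definition poly_weight :: "(nat \<Rightarrow> nat) \<Rightarrow> 'k::zero mpoly \<Rightarrow> nat" where
  "poly_weight w p = Max (insert 0 (monom_weight w ` keys p))"

lemma tdeg_eq_poly_weight: "tdeg = poly_weight (\<lambda>_. 1)"
  by (simp add: fun_eq_iff tdeg_def poly_weight_def mdeg_eq_monom_weight)

lemma poly_weight_ge: "a \<in> keys p \<Longrightarrow> monom_weight w a \<le> poly_weight w p"
  unfolding poly_weight_def by (rule Max_ge) auto

lemma mdeg_le_tdeg: "a \<in> keys p \<Longrightarrow> mdeg a \<le> tdeg p"
  by (simp add: tdeg_eq_poly_weight mdeg_eq_monom_weight poly_weight_ge)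

lemma poly_weight_le: "(\<And>a. a \<in> keys p \<Longrightarrow> monom_weight w a \<le> N) \<Longrightarrow> poly_weight w p \<le> N"
  unfolding poly_weight_def by (rule Max.boundedI) auto

lemma poly_weight_attained:
  assumes "p \<noteq> 0"
  obtains a where "a \<in> keys p" "monom_weight w a = poly_weight w p"
proof -
  obtain a0 where a0: "a0 \<in> keys p"
    using assms by (metis all_not_in_conv keys_eq_empty)
  have "poly_weight w p \<in> insert 0 (monom_weight w ` keys p)"
    unfolding poly_weight_def by (rule Max_in) auto
  with a0 poly_weight_ge[OF a0, of w] show ?thesis
    using that by (metis image_iff insertE le_zero_eq)
qed

lemma poly_weight_mult_le:
  "poly_weight w (p * q) \<le> poly_weight w p + poly_weight w (q :: 'k::comm_semiring_0 mpoly)"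
proof (rule poly_weight_le)
  fix c assume "c \<in> keys (p * q)"
  then obtain a b where "c = a + b" "a \<in> keys p" "b \<in> keys q"
    using keys_mult by blast
  then show "monom_weight w c \<le> poly_weight w p + poly_weight w q"
    using poly_weight_ge[of a p w] poly_weight_ge[of b q w] by (simp add: monom_weight_add)
qed

lemma poly_weight_split_top:
  fixes p :: "'k::ab_group_add mpoly"
  assumes "p \<noteq> 0"
  obtains p1 p2 where "p = p1 + p2" "p1 \<noteq> 0"
    "\<And>a. a \<in> keys p1 \<Longrightarrow> monom_weight w a = poly_weight w p"
    "\<And>a. a \<in> keys p2 \<Longrightarrow> monom_weight w a < poly_weight w p"
proof
  define p1 where "p1 = Poly_Mapping.mapp (\<lambda>a c. c when monom_weight w a = poly_weight w p) p"
  show "p = p1 + (p - p1)" by simp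
  show "monom_weight w a = poly_weight w p" if "a \<in> keys p1" for a
    using that by (simp add: p1_def in_keys_iff lookup_mapp)
  show "monom_weight w a < poly_weight w p" if "a \<in> keys (p - p1)" for a
  proof -
    have "a \<in> keys p" "monom_weight w a \<noteq> poly_weight w p"
      using that
      by (auto simp: p1_def in_keys_iff lookup_mapp lookup_minus when_def split: if_splits)
    then show ?thesis using poly_weight_ge[of a p w] by simp
  qed
  obtain a where "a \<in> keys p" "monom_weight w a = poly_weight w p"
    using poly_weight_attained[OF assms] by blast
  then show "p1 \<noteq> 0"
    by (auto simp: p1_def poly_mapping_eq_iff fun_eq_iff lookup_mapp in_keys_iff when_def)
qed

lemma poly_weight_mult:
  fixes p q :: "'k::idom mpoly"
  assumes "p \<noteq> 0" "q \<noteq> 0"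
  shows "poly_weight w (p * q) = poly_weight w p + poly_weight w q"
proof (rule antisym[OF poly_weight_mult_le])
  let ?D = "poly_weight w p" and ?E = "poly_weight w q"
  obtain p1 p2 where p: "p = p1 + p2" "p1 \<noteq> 0"
    and p1: "\<And>a. a \<in> keys p1 \<Longrightarrow> monom_weight w a = ?D"
    and p2: "\<And>a. a \<in> keys p2 \<Longrightarrow> monom_weight w a < ?D"
    using poly_weight_split_top[OF assms(1)] by blast
  obtain q1 q2 where q: "q = q1 + q2" "q1 \<noteq> 0"
    and q1: "\<And>b. b \<in> keys q1 \<Longrightarrow> monom_weight w b = ?E"
    and q2: "\<And>b. b \<in> keys q2 \<Longrightarrow> monom_weight w b < ?E"
    using poly_weight_split_top[OF assms(2)] by blast
  have "p1 * q1 \<noteq> 0" using p q by simp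
  then obtain c where c: "c \<in> keys (p1 * q1)"
    by (metis all_not_in_conv keys_eq_empty)
  have wc: "monom_weight w c = ?D + ?E"
    using keys_mult[of p1 q1] c p1 q1 by (force simp: monom_weight_add)
  define rest where "rest = p1 * q2 + p2 * q"
  have "c \<notin> keys (p1 * q2)" "c \<notin> keys (p2 * q)"
    using keys_mult[of p1 q2] keys_mult[of p2 q] wc p1 q2 p2 poly_weight_ge[of _ q w]
    by (force simp: monom_weight_add)+
  then have "lookup rest c = 0"
    by (simp add: rest_def lookup_add in_keys_iff)
  moreover have "p * q = p1 * q1 + rest"
    unfolding rest_def p q by (simp add: algebra_simps)
  ultimately have "c \<in> keys (p * q)"
    using c by (simp add: in_keys_iff lookup_add)
  then show "?D + ?E \<le> poly_weight w (p * q)"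
    using poly_weight_ge wc by metis
qed

lemma poly_weight_dvd:
  fixes p q :: "'k::idom mpoly"
  assumes "p dvd q" "q \<noteq> 0"
  shows "poly_weight w p \<le> poly_weight w q"
  using assms poly_weight_mult by fastforce

lemma poly_weight_prod_le:
  "poly_weight w (\<Prod>i\<in>I. f i) \<le> (\<Sum>i\<in>I. poly_weight w (f i :: 'k::comm_semiring_1 mpoly))"
proof (induction I rule: infinite_finite_induct)
  case (insert i I)
  then show ?case using poly_weight_mult_le[of w "f i" "prod f I"] by simp
qed (simp_all add: poly_weight_def)

lemma poly_weight_power_le:
  "poly_weight w (p ^ u :: 'k::comm_semiring_1 mpoly) \<le> u * poly_weight w p"
  using poly_weight_prod_le[of w "\<lambda>_. p" "{..<u}"] by simp

lemma is_poly_n_iff_poly_weight: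
  "is_poly_n n p \<longleftrightarrow> poly_weight (\<lambda>i. of_bool (i \<notin> {1..n})) p = 0"
proof -
  have "monom_weight (\<lambda>i. of_bool (i \<notin> {1..n})) a = 0 \<longleftrightarrow> keys a \<subseteq> {1..n}" for a
    unfolding monom_weight_def by (subst sum_eq_0_iff) (auto simp: in_keys_iff subset_iff)
  then show ?thesis
    unfolding is_poly_n_def
    by (metis (no_types, lifting) le_zero_eq poly_weight_ge poly_weight_le)
qed

lemma is_poly_n_mult:
  "is_poly_n n p \<Longrightarrow> is_poly_n n q \<Longrightarrow> is_poly_n n (p * q :: 'k::comm_semiring_0 mpoly)"
  unfolding is_poly_n_iff_poly_weight
  using poly_weight_mult_le[of _ p q] by (metis add_0 le_zero_eq)

lemma is_poly_n_prod:
  "(\<And>i. i \<in> I \<Longrightarrow> is_poly_n n (f i)) \<Longrightarrow> is_poly_n n (\<Prod>i\<in>I. f i :: 'k::comm_semiring_1 mpoly)"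
  unfolding is_poly_n_iff_poly_weight
  using poly_weight_prod_le[of "\<lambda>i. of_bool (i \<notin> {1..n})" f I] by simp

lemma is_poly_n_power: "is_poly_n n p \<Longrightarrow> is_poly_n n (p ^ u :: 'k::comm_semiring_1 mpoly)"
  unfolding is_poly_n_iff_poly_weight
  using poly_weight_power_le[of _ p u] by (metis mult_0_right le_zero_eq)

lemma is_poly_n_dvd:
  "p dvd q \<Longrightarrow> q \<noteq> 0 \<Longrightarrow> is_poly_n n q \<Longrightarrow> is_poly_n n (p :: 'k::idom mpoly)"
  unfolding is_poly_n_iff_poly_weight using poly_weight_dvd[of p q] by (metis le_zero_eq)

section \<open>Products in the Weyl algebra\<close>

definition contractions :: "monom \<Rightarrow> monom \<Rightarrow> monom set" where
  "contractions b c = {k. \<forall>i. lookup k i \<le> lookup b i \<and> lookup k i \<le> lookup c i}"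

definition contraction_coeff :: "monom \<Rightarrow> monom \<Rightarrow> monom \<Rightarrow> 'k::field_char_0" where
  "contraction_coeff b c k = (\<Prod>i\<in>keys k. of_nat ((lookup b i choose lookup k i)
      * (lookup c i choose lookup k i) * fact (lookup k i)))"

lemma weyl_mono_mult_eq: "weyl_mono_mult (a, b) (c, e) =
   (\<Sum>k\<in>contractions b c. single (a + c - k, b + e - k) (contraction_coeff b c k))"
  by (simp add: weyl_mono_mult_def contractions_def contraction_coeff_def)

lemma finite_contractions: "finite (contractions b c)"
proof -
  let ?F = "{f. \<forall>i. (i \<in> keys b \<longrightarrow> f i \<in> {..mdeg b}) \<and> (i \<notin> keys b \<longrightarrow> f i = 0)}"
  have "lookup k \<in> ?F" if "k \<in> contractions b c" for k
  proof -
    have "lookup k i \<le> lookup b i" for i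
      using that by (simp add: contractions_def)
    then show ?thesis
      using lookup_le_mdeg[of b] by (auto simp: in_keys_iff intro: le_trans) (metis le_zero_eq)
  qed
  then have "finite (lookup ` contractions b c)"
    by (intro finite_subset[OF _ finite_set_of_finite_funs[of "keys b" "{..mdeg b}" 0]]) auto
  then show ?thesis
    by (rule finite_imageD) (auto intro: inj_onI)
qed

lemma zero_in_contractions [simp]: "0 \<in> contractions b c"
  by (simp add: contractions_def)

lemma contractions_zero_left [simp]: "contractions 0 c = {0}"
  by (auto simp: contractions_def intro: poly_mapping_eqI)

lemma contraction_coeff_zero [simp]: "contraction_coeff b c 0 = 1"
  by (simp add: contraction_coeff_def)

lemma lookup_map_times: "lookup (Poly_Mapping.map ((*) s) p) k = s * lookup p k"
  for s :: "'a::mult_zero"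
  by (simp add: map.rep_eq when_def)

lemma keys_map_times: "keys (Poly_Mapping.map ((*) s) p) \<subseteq> keys p"
  for s :: "'a::mult_zero"
  by (auto simp: in_keys_iff lookup_map_times)

lemma map_times_add:
  "Poly_Mapping.map ((*) (s + t)) p = Poly_Mapping.map ((*) s) p + Poly_Mapping.map ((*) t) p"
  for s :: "'a::semiring_0"
  by (rule poly_mapping_eqI) (simp add: lookup_map_times lookup_add distrib_right)

lemma map_times_sum: "Poly_Mapping.map ((*) s) (\<Sum>i\<in>I. f i) = (\<Sum>i\<in>I. Poly_Mapping.map ((*) s) (f i))"
  for s :: "'a::semiring_0"
  by (rule poly_mapping_eqI) (simp add: lookup_map_times lookup_sum sum_distrib_left)

lemma poly_mapping_sum_single: "(\<Sum>m\<in>keys p. single m (lookup p m)) = p"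
proof (rule poly_mapping_eqI)
  fix k
  have "(\<Sum>m\<in>keys p. lookup (single m (lookup p m)) k) =
      (\<Sum>m\<in>keys p. if m = k then lookup p m else 0)"
    by (intro sum.cong) (simp_all add: lookup_single when_def)
  then show "lookup (\<Sum>m\<in>keys p. single m (lookup p m)) k = lookup p k"
    by (simp add: lookup_sum in_keys_iff)
qed

lemma weyl_mult_expand:
  assumes "finite A" "keys p \<subseteq> A" "finite B" "keys q \<subseteq> B"
  shows "weyl_mult p q =
    (\<Sum>m\<in>A. \<Sum>m'\<in>B. Poly_Mapping.map ((*) (lookup p m * lookup q m')) (weyl_mono_mult m m'))"
proof -
  have zero: "Poly_Mapping.map ((*) 0) x = 0" for x :: "'a weyl"
    by (simp add: map_eq_zero_iff)
  have "weyl_mult p q = (\<Sum>m\<in>keys p. \<Sum>m'\<in>B.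
      Poly_Mapping.map ((*) (lookup p m * lookup q m')) (weyl_mono_mult m m'))"
    unfolding weyl_mult_def
    by (intro sum.cong refl sum.mono_neutral_left assms) (auto simp: in_keys_iff zero)
  also have "\<dots> = (\<Sum>m\<in>A. \<Sum>m'\<in>B.
      Poly_Mapping.map ((*) (lookup p m * lookup q m')) (weyl_mono_mult m m'))"
    by (intro sum.mono_neutral_left assms) (auto simp: in_keys_iff zero)
  finally show ?thesis .
qed

lemma weyl_mult_add_left: "weyl_mult (p1 + p2) q = weyl_mult p1 q + weyl_mult p2 q"
proof -
  let ?A = "keys p1 \<union> keys p2"
  have "keys (p1 + p2) \<subseteq> ?A" by (rule keys_add)
  then show ?thesis
    by (subst (1 2 3) weyl_mult_expand[of ?A _ "keys q"])
       (auto simp: lookup_add distrib_right map_times_add sum.distrib)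
qed

lemma weyl_mult_add_right: "weyl_mult p (q1 + q2) = weyl_mult p q1 + weyl_mult p q2"
proof -
  let ?B = "keys q1 \<union> keys q2"
  have "keys (q1 + q2) \<subseteq> ?B" by (rule keys_add)
  then show ?thesis
    by (subst (1 2 3) weyl_mult_expand[of "keys p" _ ?B])
       (auto simp: lookup_add distrib_left map_times_add sum.distrib)
qed

lemma weyl_mult_zero_left [simp]: "weyl_mult 0 q = 0"
  by (simp add: weyl_mult_def)

lemma weyl_mult_zero_right [simp]: "weyl_mult p 0 = 0"
  by (simp add: weyl_mult_def)

lemma weyl_mult_sum_left: "weyl_mult (\<Sum>i\<in>I. f i) q = (\<Sum>i\<in>I. weyl_mult (f i) q)"
  by (induction I rule: infinite_finite_induct) (simp_all add: weyl_mult_add_left)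

lemma weyl_mult_sum_right: "weyl_mult p (\<Sum>i\<in>I. f i) = (\<Sum>i\<in>I. weyl_mult p (f i))"
  by (induction I rule: infinite_finite_induct) (simp_all add: weyl_mult_add_right)

lemma weyl_mult_eq_sum_right: "weyl_mult p q = (\<Sum>m\<in>keys q. weyl_mult p (single m (lookup q m)))"
  by (simp add: weyl_mult_sum_right[symmetric] poly_mapping_sum_single)

lemma weyl_mult_eq_sum_left: "weyl_mult p q = (\<Sum>m\<in>keys p. weyl_mult (single m (lookup p m)) q)"
  by (simp add: weyl_mult_sum_left[symmetric] poly_mapping_sum_single)

lemma weyl_mult_single_single: "weyl_mult (single (a, b) x) (single (c, e) y) =
   (\<Sum>k\<in>contractions b c. single (a + c - k, b + e - k) (x * y * contraction_coeff b c k))"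
  by (subst weyl_mult_expand[of "{(a, b)}" _ "{(c, e)}"])
     (simp_all add: weyl_mono_mult_eq map_times_sum mult.assoc)

lemma weyl_mult_xmonom_single:
  "weyl_mult (single (p, 0) s) (single (c, e) y) = single (p + c, e) (s * y)"
  by (simp add: weyl_mult_single_single)

lemma keys_weyl_mult:
  fixes p q :: "'k::field_char_0 weyl"
  shows "keys (weyl_mult p q) \<subseteq>
   {(a + c - k, b + e - k) | a b c e k. (a, b) \<in> keys p \<and> (c, e) \<in> keys q \<and> k \<in> contractions b c}"
proof
  fix x assume "x \<in> keys (weyl_mult p q)"
  then obtain m m' where m: "m \<in> keys p" "m' \<in> keys q"
    and x: "x \<in> keys (Poly_Mapping.map ((*) (lookup p m * lookup q m')) (weyl_mono_mult m m'))"
    unfolding weyl_mult_def by (blast dest: keys_sum[THEN subsetD])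
  from keys_map_times[THEN subsetD, OF x] have "x \<in> keys (weyl_mono_mult m m' :: 'k weyl)" .
  moreover obtain a b c e where "m = (a, b)" "m' = (c, e)" by fastforce
  ultimately show "x \<in> {(a + c - k, b + e - k) | a b c e k.
      (a, b) \<in> keys p \<and> (c, e) \<in> keys q \<and> k \<in> contractions b c}"
    using m by (force simp: weyl_mono_mult_eq dest: keys_sum[THEN subsetD] split: if_splits)
qed

lemma lookup_poly_D: "lookup (poly_D f \<beta>) (a, b) = (if b = \<beta> then lookup f a else 0)"
proof -
  have "finite {x. (case x of (a, b) \<Rightarrow> if b = \<beta> then lookup f a else 0) \<noteq> 0}"
    by (rule finite_subset[of _ "(\<lambda>a. (a, \<beta>)) ` keys f"]) (auto simp: in_keys_iff split: if_splits)
  then show ?thesis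
    unfolding poly_D_def by simp
qed

lemma keys_poly_D: "keys (poly_D f \<beta>) = (\<lambda>a. (a, \<beta>)) ` keys f"
  by (force simp: in_keys_iff lookup_poly_D split: if_splits)

lemma poly_D_single: "poly_D (single a s) \<beta> = single (a, \<beta>) s"
proof (rule poly_mapping_eqI)
  fix m show "lookup (poly_D (single a s) \<beta>) m = lookup (single (a, \<beta>) s) m"
    by (cases m) (auto simp: lookup_poly_D lookup_single when_def)
qed

lemma poly_D_add: "poly_D (f + g) \<beta> = poly_D f \<beta> + poly_D g \<beta>"
  by (rule poly_mapping_eqI) (auto simp: lookup_poly_D lookup_add)

lemma poly_D_sum: "poly_D (\<Sum>i\<in>I. f i) \<beta> = (\<Sum>i\<in>I. poly_D (f i) \<beta>)"
proof (induction I rule: infinite_finite_induct)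
  case empty
  show ?case by (rule poly_mapping_eqI) (auto simp: lookup_poly_D)
qed (simp_all add: poly_D_add, rule poly_mapping_eqI, auto simp: lookup_poly_D)

lemma poly_D_eq_sum_single: "poly_D f \<beta> = (\<Sum>a\<in>keys f. single (a, \<beta>) (lookup f a))"
proof -
  have "poly_D f \<beta> = poly_D (\<Sum>a\<in>keys f. single a (lookup f a)) \<beta>"
    by (simp only: poly_mapping_sum_single)
  then show ?thesis
    by (simp add: poly_D_sum poly_D_single)
qed

lemma weyl_mult_poly_single:
  "weyl_mult (poly_to_weyl P) (single (c, e) y) = (\<Sum>a\<in>keys P. single (a + c, e) (lookup P a * y))"
  unfolding poly_to_weyl_def poly_D_eq_sum_single weyl_mult_sum_left
  by (simp add: weyl_mult_xmonom_single)

lemma weyl_mult_poly_D: "weyl_mult (poly_to_weyl P) (poly_D f e) = poly_D (P * f) e"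
proof -
  have "P * f = (\<Sum>a\<in>keys P. \<Sum>c\<in>keys f. single (a + c) (lookup P a * lookup f c))"
    by (subst (1) poly_mapping_sum_single[symmetric], subst (1) poly_mapping_sum_single[symmetric])
       (simp add: sum_product mult_single)
  then have "poly_D (P * f) e = (\<Sum>a\<in>keys P. \<Sum>c\<in>keys f. single (a + c, e) (lookup P a * lookup f c))"
    by (simp add: poly_D_sum poly_D_single)
  also have "\<dots> = weyl_mult (poly_to_weyl P) (poly_D f e)"
    unfolding poly_D_eq_sum_single[of f] weyl_mult_sum_right weyl_mult_poly_single
    by (rule sum.swap)
  finally show ?thesis ..
qed

lemma poly_to_weyl_mult: "weyl_mult (poly_to_weyl P) (poly_to_weyl Q) = poly_to_weyl (P * Q)"
  unfolding poly_to_weyl_def[of Q] poly_to_weyl_def[of "P * Q"] by (rule weyl_mult_poly_D)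

(* Left multiplication by x^p only shifts x-exponents; this is the only instance of
   associativity of the Weyl product that the argument needs. *)

lemma weyl_mult_assoc_xmonom_single:
  "weyl_mult (single (p, 0) s) (weyl_mult (single m x) (single m' y)) =
   weyl_mult (weyl_mult (single (p, 0) s) (single m x)) (single m' y)"
proof -
  obtain a b c e where m: "m = (a, b)" and m': "m' = (c, e)" by fastforce
  have "p + (a + c - k) = p + a + c - k" if "k \<in> contractions b c" for k
  proof (rule poly_mapping_eqI)
    fix i have "lookup k i \<le> lookup c i" using that by (simp add: contractions_def)
    then show "lookup (p + (a + c - k)) i = lookup (p + a + c - k) i"
      by (simp add: lookup_add lookup_minus)
  qed
  then show ?thesis
    unfolding m m' weyl_mult_single_single[of a b x] weyl_mult_sum_right
    by (simp add: weyl_mult_xmonom_single weyl_mult_single_single add.assoc mult.assoc)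
qed

lemma weyl_mult_assoc_xmonom:
  "weyl_mult (single (p, 0) s) (weyl_mult X Y) = weyl_mult (weyl_mult (single (p, 0) s) X) Y"
proof -
  let ?x = "\<lambda>m. single m (lookup X m)" and ?y = "\<lambda>m. single m (lookup Y m)"
  have "weyl_mult (single (p, 0) s) (weyl_mult X Y) =
      (\<Sum>m\<in>keys X. \<Sum>m'\<in>keys Y. weyl_mult (single (p, 0) s) (weyl_mult (?x m) (?y m')))"
    by (subst weyl_mult_eq_sum_left, subst weyl_mult_eq_sum_right) (simp only: weyl_mult_sum_right)
  also have "\<dots> = (\<Sum>m\<in>keys X. \<Sum>m'\<in>keys Y. weyl_mult (weyl_mult (single (p, 0) s) (?x m)) (?y m'))"
    by (simp only: weyl_mult_assoc_xmonom_single)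
  also have "\<dots> = (\<Sum>m\<in>keys X. weyl_mult (weyl_mult (single (p, 0) s) (?x m)) Y)"
    by (intro sum.cong refl) (rule weyl_mult_eq_sum_right[symmetric])
  also have "\<dots> = weyl_mult (weyl_mult (single (p, 0) s) X) Y"
    by (subst weyl_mult_eq_sum_right[of _ X]) (rule weyl_mult_sum_left[symmetric])
  finally show ?thesis .
qed

lemma weyl_mult_assoc_poly:
  "weyl_mult (poly_to_weyl P) (weyl_mult X Y) = weyl_mult (weyl_mult (poly_to_weyl P) X) Y"
  unfolding poly_to_weyl_def poly_D_eq_sum_single weyl_mult_sum_left
  by (simp add: weyl_mult_assoc_xmonom)

lemma weyl_mult_poly_to_weyl_mult:
  "weyl_mult (poly_to_weyl (P * Q)) X = weyl_mult (poly_to_weyl P) (weyl_mult (poly_to_weyl Q) X)"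
  by (simp add: weyl_mult_assoc_poly poly_to_weyl_mult)

lemma keys_weyl_mult_single_poly_D:
  "keys (weyl_mult (single (a, \<gamma>) s) (poly_D f \<delta>)) \<subseteq>
     {(a + c - k, \<gamma> + \<delta> - k) | c k. c \<in> keys f \<and> k \<in> contractions \<gamma> c}"
  using keys_weyl_mult[of "single (a, \<gamma>) s" "poly_D f \<delta>"]
  unfolding keys_poly_D by (auto split: if_splits) blast

lemma keys_weyl_mult_single_poly_D_diff:
  "keys (weyl_mult (single (a, \<gamma>) s) (poly_D f \<delta>)
      - weyl_mult (poly_to_weyl f) (single (a, \<gamma> + \<delta>) s))
     \<subseteq> {(a + c - k, \<gamma> + \<delta> - k) | c k. c \<in> keys f \<and> k \<in> contractions \<gamma> c \<and> k \<noteq> 0}"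
proof -
  let ?term = "\<lambda>c k. single (a + c - k, \<gamma> + \<delta> - k) (s * lookup f c * contraction_coeff \<gamma> c k)"
  have "weyl_mult (single (a, \<gamma>) s) (poly_D f \<delta>) = (\<Sum>c\<in>keys f. \<Sum>k\<in>contractions \<gamma> c. ?term c k)"
    unfolding poly_D_eq_sum_single weyl_mult_sum_right weyl_mult_single_single ..
  also have "\<dots> = weyl_mult (poly_to_weyl f) (single (a, \<gamma> + \<delta>) s)
      + (\<Sum>c\<in>keys f. \<Sum>k\<in>contractions \<gamma> c - {0}. ?term c k)"
    by (simp add: weyl_mult_poly_single sum.remove[OF finite_contractions zero_in_contractions]
        sum.distrib add.commute mult.commute)
  finally show ?thesis
    by (auto dest!: keys_sum[THEN subsetD] split: if_splits) blast
qed

lemma in_Wn_weyl_mult: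
  assumes "in_Wn n p" "in_Wn n q"
  shows "in_Wn n (weyl_mult p q)"
  unfolding in_Wn_def
proof (clarify)
  have keys_diff_add: "keys (u + v - k) \<subseteq> keys u \<union> keys v" for u v k :: monom
    by (meson keys_add keys_monom_diff order_trans)
  fix x y assume "(x, y) \<in> keys (weyl_mult p q)"
  from keys_weyl_mult[THEN subsetD, OF this]
  obtain a b c e k where ab: "(a, b) \<in> keys p" and ce: "(c, e) \<in> keys q"
    and xy: "x = a + c - k" "y = b + e - k"
    by auto
  have "keys a \<subseteq> {1..n}" "keys b \<subseteq> {1..n}" "keys c \<subseteq> {1..n}" "keys e \<subseteq> {1..n}"
    using assms ab ce unfolding in_Wn_def by auto
  then show "keys x \<subseteq> {1..n} \<and> keys y \<subseteq> {1..n}"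
    unfolding xy using keys_diff_add by (meson le_sup_iff order_trans)
qed

lemma in_Wn_poly_to_weyl: "is_poly_n n P \<Longrightarrow> in_Wn n (poly_to_weyl P)"
  by (auto simp: in_Wn_def is_poly_n_def poly_to_weyl_def keys_poly_D)

lemma in_Wn_single: "keys a \<subseteq> {1..n} \<Longrightarrow> keys b \<subseteq> {1..n} \<Longrightarrow> in_Wn n (single (a, b) s)"
  by (simp add: in_Wn_def)

section \<open>The spaces Hcal and left ideals\<close>

lemma sum_closed:
  assumes "0 \<in> A" "\<And>x y. x \<in> A \<Longrightarrow> y \<in> A \<Longrightarrow> x + y \<in> A" "\<And>i. i \<in> I \<Longrightarrow> f i \<in> A"
  shows "sum f I \<in> A"
  using assms(3) by (induction I rule: infinite_finite_induct) (simp_all add: assms(1,2))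

definition Hmonomials :: "nat \<Rightarrow> nat set \<Rightarrow> (nat \<Rightarrow> nat) \<Rightarrow> nat \<Rightarrow> int \<Rightarrow> (monom \<times> monom) set" where
  "Hmonomials n S r d rr = {(a, b). keys a \<subseteq> {1..n} \<and> mdeg a \<le> d \<and> keys b \<subseteq> S \<and>
      (int (mdeg b) \<le> rr \<or> (\<forall>j\<in>S. lookup b j < r j))}"

lemma Hcal_iff_keys: "h \<in> Hcal n S r d rr \<longleftrightarrow> keys h \<subseteq> Hmonomials n S r d rr"
  by (auto simp: Hcal_def Hmonomials_def)

lemma Hmonomials_mono: "d \<le> d' \<Longrightarrow> rr \<le> rr' \<Longrightarrow> Hmonomials n S r d rr \<subseteq> Hmonomials n S r d' rr'"
  by (auto simp: Hmonomials_def)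

lemma Hcal_mono: "d \<le> d' \<Longrightarrow> rr \<le> rr' \<Longrightarrow> Hcal n S r d rr \<subseteq> Hcal n S r d' rr'"
  using Hmonomials_mono by (fastforce simp: Hcal_iff_keys)

lemma Hcal_add: "h \<in> Hcal n S r d rr \<Longrightarrow> h' \<in> Hcal n S r d rr \<Longrightarrow> h + h' \<in> Hcal n S r d rr"
  using keys_add by (fastforce simp: Hcal_iff_keys)

lemma Hcal_diff: "h \<in> Hcal n S r d rr \<Longrightarrow> h' \<in> Hcal n S r d rr \<Longrightarrow> h - h' \<in> Hcal n S r d rr"
  using keys_diff by (fastforce simp: Hcal_iff_keys)

lemma Hcal_zero: "0 \<in> Hcal n S r d rr"
  by (simp add: Hcal_iff_keys)

lemma Hcal_sum: "(\<And>i. i \<in> I \<Longrightarrow> f i \<in> Hcal n S r d rr) \<Longrightarrow> sum f I \<in> Hcal n S r d rr"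
  by (rule sum_closed[OF Hcal_zero Hcal_add])

lemma single_in_Hcal: "x \<in> Hmonomials n S r d rr \<Longrightarrow> single x s \<in> Hcal n S r d rr"
  by (simp add: Hcal_iff_keys)

lemma diff_in_Hmonomials:
  assumes "keys a \<subseteq> {1..n}" "mdeg a \<le> t" "keys c \<subseteq> {1..n}" "mdeg c \<le> D"
    and "keys b \<subseteq> S" "int (mdeg b) \<le> rr"
  shows "(a + c - k, b) \<in> Hmonomials n S r (t + D) rr"
proof -
  have "keys (a + c - k) \<subseteq> {1..n}"
    using assms(1,3) keys_monom_diff[of "a + c" k] keys_add[of a c] by blast
  moreover have "mdeg (a + c - k) \<le> t + D"
    using assms(2,4) mdeg_mono[of "a + c - k" "a + c"] by (simp add: lookup_minus mdeg_add)
  ultimately show ?thesis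
    using assms(5,6) by (simp add: Hmonomials_def)
qed

lemma poly_times_Hcal:
  assumes "is_poly_n n P" "h \<in> Hcal n S r d rr"
  shows "weyl_mult (poly_to_weyl P) h \<in> Hcal n S r (tdeg P + d) rr"
  unfolding Hcal_iff_keys
proof
  fix x assume "x \<in> keys (weyl_mult (poly_to_weyl P) h)"
  then obtain c a b where c: "c \<in> keys P" and ab: "(a, b) \<in> keys h" and x: "x = (c + a, b)"
    using keys_weyl_mult[of "poly_to_weyl P" h] by (auto simp: poly_to_weyl_def keys_poly_D)
  have "keys c \<subseteq> {1..n}" "mdeg c \<le> tdeg P"
    using assms(1) c mdeg_le_tdeg by (auto simp: is_poly_n_def)
  moreover have "keys a \<subseteq> {1..n}" "mdeg a \<le> d" "keys b \<subseteq> S"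
    "int (mdeg b) \<le> rr \<or> (\<forall>j\<in>S. lookup b j < r j)"
    using ab assms(2) by (auto simp: Hcal_iff_keys Hmonomials_def)
  ultimately show "x \<in> Hmonomials n S r (tdeg P + d) rr"
    unfolding x Hmonomials_def using keys_add[of c a] by (auto simp: mdeg_add)
qed

lemma single_times_poly_D_in_Hcal:
  assumes "keys a \<subseteq> {1..n}" "mdeg a \<le> t" "is_poly_n n f" "tdeg f \<le> D"
    and "keys \<gamma> \<subseteq> S" "keys \<delta> \<subseteq> S"
  shows "weyl_mult (single (a, \<gamma>) s) (poly_D f \<delta>) \<in> Hcal n S r (t + D) (int (mdeg (\<gamma> + \<delta>)))"
  unfolding Hcal_iff_keys
proof (rule order.trans[OF keys_weyl_mult_single_poly_D], clarify)
  fix c k assume c: "c \<in> keys f" and k: "k \<in> contractions \<gamma> c"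
  have "keys (\<gamma> + \<delta> - k) \<subseteq> S"
    using assms(5,6) keys_monom_diff[of "\<gamma> + \<delta>" k] keys_add[of \<gamma> \<delta>] by blast
  moreover have "mdeg (\<gamma> + \<delta> - k) \<le> mdeg (\<gamma> + \<delta>)"
    by (rule mdeg_mono) (simp add: lookup_minus)
  ultimately show "(a + c - k, \<gamma> + \<delta> - k) \<in> Hmonomials n S r (t + D) (int (mdeg (\<gamma> + \<delta>)))"
    using assms(1-4) c mdeg_le_tdeg[OF c] by (intro diff_in_Hmonomials) (auto simp: is_poly_n_def)
qed

lemma single_times_poly_D_lower_order_in_Hcal:
  assumes "keys a \<subseteq> {1..n}" "mdeg a \<le> t" "is_poly_n n f" "tdeg f \<le> D"
    and "keys \<gamma> \<subseteq> S" "keys \<delta> \<subseteq> S"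
  shows "weyl_mult (single (a, \<gamma>) s) (poly_D f \<delta>) - weyl_mult (poly_to_weyl f) (single (a, \<gamma> + \<delta>) s)
    \<in> Hcal n S r (t + D) (int (mdeg (\<gamma> + \<delta>)) - 1)"
  unfolding Hcal_iff_keys
proof (rule order.trans[OF keys_weyl_mult_single_poly_D_diff], clarify)
  fix c k assume c: "c \<in> keys f" and k: "k \<in> contractions \<gamma> c" "k \<noteq> 0"
  have "keys (\<gamma> + \<delta> - k) \<subseteq> S"
    using assms(5,6) keys_monom_diff[of "\<gamma> + \<delta>" k] keys_add[of \<gamma> \<delta>] by blast
  moreover have "mdeg (\<gamma> + \<delta> - k) + mdeg k = mdeg (\<gamma> + \<delta>)"
    using k(1) by (subst mdeg_add[symmetric], subst monom_diff_add)
      (auto simp: contractions_def lookup_add intro: le_trans)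
  moreover have "mdeg k \<noteq> 0"
    using k(2) by (simp add: mdeg_eq_0_iff)
  ultimately show "(a + c - k, \<gamma> + \<delta> - k) \<in> Hmonomials n S r (t + D) (int (mdeg (\<gamma> + \<delta>)) - 1)"
    using assms(1-4) c mdeg_le_tdeg[OF c] by (intro diff_in_Hmonomials) (auto simp: is_poly_n_def)
qed

lemma left_ideal_gen_zero: "0 \<in> left_ideal_gen n S G"
  unfolding left_ideal_gen_def by (rule CollectI, rule exI[of _ "\<lambda>_. 0"]) (simp add: in_Wn_def)

lemma left_ideal_gen_add:
  assumes "g \<in> left_ideal_gen n S G" "g' \<in> left_ideal_gen n S G"
  shows "g + g' \<in> left_ideal_gen n S G"
proof -
  obtain w w' where g: "g = (\<Sum>j\<in>S. weyl_mult (w j) (G j))" "\<forall>j\<in>S. in_Wn n (w j)"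
    and g': "g' = (\<Sum>j\<in>S. weyl_mult (w' j) (G j))" "\<forall>j\<in>S. in_Wn n (w' j)"
    using assms unfolding left_ideal_gen_def by blast
  have "g + g' = (\<Sum>j\<in>S. weyl_mult (w j + w' j) (G j))"
    unfolding g g' by (simp add: weyl_mult_add_left sum.distrib)
  moreover have "in_Wn n (w j + w' j)" if "j \<in> S" for j
    using g(2) g'(2) that keys_add[of "w j" "w' j"] unfolding in_Wn_def by blast
  ultimately show ?thesis
    unfolding left_ideal_gen_def by (intro CollectI exI[of _ "\<lambda>j. w j + w' j"]) simp
qed

lemma left_ideal_gen_multiple:
  assumes "finite S" "j \<in> S" "in_Wn n w"
  shows "weyl_mult w (G j) \<in> left_ideal_gen n S G"
proof -
  let ?w = "\<lambda>i. if i = j then w else 0"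
  have "weyl_mult w (G j) = (\<Sum>i\<in>S. weyl_mult (?w i) (G i))"
    using assms(1,2) by (simp add: if_distrib[of "\<lambda>v. weyl_mult v _"] cong: if_cong)
  moreover have "\<forall>i\<in>S. in_Wn n (?w i)"
    using assms(3) by (simp add: in_Wn_def)
  ultimately show ?thesis
    unfolding left_ideal_gen_def by (intro CollectI exI[of _ ?w]) simp
qed

section \<open>Reduction modulo the normalized operators\<close>

locale normalized_operators =
  fixes n :: nat and S :: "nat set" and r :: "nat \<Rightarrow> nat"
    and l :: "nat \<Rightarrow> nat \<Rightarrow> 'k::field_char_0 mpoly" and C :: "'k mpoly"
  assumes S_range: "S \<subseteq> {1..n}"
    and l_poly: "\<And>j k. j \<in> S \<Longrightarrow> k \<le> r j \<Longrightarrow> is_poly_n n (l j k)"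
    and lead_nonzero: "\<And>j. j \<in> S \<Longrightarrow> l j (r j) \<noteq> 0"
    and C_lcm: "is_lcm_n n C S (\<lambda>j. l j (r j))"
begin

definition d :: "nat \<Rightarrow> nat" where
  "d j = Max ((\<lambda>k. tdeg (l j k)) ` {..r j})"

definition dC :: nat where
  "dC = (\<Sum>j\<in>S. d j)"

definition q :: "nat \<Rightarrow> 'k mpoly" where
  "q j = poly_quot C (l j (r j))"

definition Ltilde :: "nat \<Rightarrow> 'k weyl" where
  "Ltilde j = weyl_mult (poly_to_weyl (q j)) (Lop l r j)"

definition J :: "'k weyl set" where
  "J = left_ideal_gen n S Ltilde"

lemma finite_S: "finite S"
  using S_range finite_subset by blast

lemma tdeg_l_le: "k \<le> r j \<Longrightarrow> tdeg (l j k) \<le> d j"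
  unfolding d_def by (rule Max_ge) auto

lemma C_poly: "is_poly_n n C"
  using C_lcm by (simp add: is_lcm_n_def)

lemma C_eq: assumes "j \<in> S" shows "C = q j * l j (r j)"
proof -
  have "l j (r j) dvd C"
    using C_lcm assms by (simp add: is_lcm_n_def)
  then obtain z where z: "C = z * l j (r j)"
    by (metis dvdE mult.commute)
  have "(THE x. C = x * l j (r j)) = z"
    using z lead_nonzero[OF assms] by (intro the_equality) auto
  then have "q j = z"
    by (simp only: q_def poly_quot_def)
  with z show ?thesis by simp
qed

lemma prod_nonzero: "(\<Prod>j\<in>S. l j (r j)) \<noteq> 0"
  using finite_S lead_nonzero by simp

lemma C_dvd_prod: "C dvd (\<Prod>j\<in>S. l j (r j))"
proof -
  have "is_poly_n n (\<Prod>j\<in>S. l j (r j))"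
    by (intro is_poly_n_prod l_poly) auto
  moreover have "\<forall>j\<in>S. l j (r j) dvd (\<Prod>j\<in>S. l j (r j))"
    using finite_S by auto
  ultimately show ?thesis
    using C_lcm by (simp add: is_lcm_n_def)
qed

lemma tdeg_C_le: "tdeg C \<le> dC"
proof -
  have "tdeg C \<le> tdeg (\<Prod>j\<in>S. l j (r j))"
    unfolding tdeg_eq_poly_weight using C_dvd_prod prod_nonzero by (rule poly_weight_dvd)
  also have "\<dots> \<le> (\<Sum>j\<in>S. tdeg (l j (r j)))"
    unfolding tdeg_eq_poly_weight by (rule poly_weight_prod_le)
  also have "\<dots> \<le> dC"
    unfolding dC_def by (intro sum_mono tdeg_l_le) simp
  finally show ?thesis .
qed

lemma q_poly: "j \<in> S \<Longrightarrow> is_poly_n n (q j)"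
proof -
  assume j: "j \<in> S"
  have "C \<noteq> 0"
    using C_dvd_prod prod_nonzero by auto
  moreover have "q j dvd C"
    by (subst C_eq[OF j]) simp
  ultimately show ?thesis
    using C_poly by (intro is_poly_n_dvd[of "q j" C])
qed

lemma tdeg_q_le:
  assumes "j \<in> S"
  shows "tdeg (q j) + d j \<le> dC"
proof -
  obtain z where z: "(\<Prod>i\<in>S. l i (r i)) = C * z"
    using C_dvd_prod by blast
  have "(\<Prod>i\<in>S. l i (r i)) = l j (r j) * (\<Prod>i\<in>S - {j}. l i (r i))"
    using finite_S assms by (simp add: prod.remove)
  then have "l j (r j) * (\<Prod>i\<in>S - {j}. l i (r i)) = l j (r j) * (q j * z)"
    using z C_eq[OF assms] by (simp add: ac_simps)
  then have "q j dvd (\<Prod>i\<in>S - {j}. l i (r i))"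
    using lead_nonzero[OF assms] by simp
  then have "tdeg (q j) \<le> tdeg (\<Prod>i\<in>S - {j}. l i (r i))"
    unfolding tdeg_eq_poly_weight using finite_S lead_nonzero
    by (intro poly_weight_dvd) auto
  also have "\<dots> \<le> (\<Sum>i\<in>S - {j}. tdeg (l i (r i)))"
    unfolding tdeg_eq_poly_weight by (rule poly_weight_prod_le)
  also have "\<dots> \<le> (\<Sum>i\<in>S - {j}. d i)"
    by (intro sum_mono tdeg_l_le) simp
  finally show ?thesis
    unfolding dC_def using finite_S assms by (simp add: sum.remove)
qed

lemma Ltilde_coeff:
  assumes "j \<in> S" "k \<le> r j"
  shows "is_poly_n n (q j * l j k)" "tdeg (q j * l j k) \<le> dC"
proof -
  show "is_poly_n n (q j * l j k)"
    using q_poly[OF assms(1)] l_poly[OF assms] by (rule is_poly_n_mult)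
  have "tdeg (q j * l j k) \<le> tdeg (q j) + tdeg (l j k)"
    unfolding tdeg_eq_poly_weight by (rule poly_weight_mult_le)
  then show "tdeg (q j * l j k) \<le> dC"
    using tdeg_q_le[OF assms(1)] tdeg_l_le[OF assms(2)] by linarith
qed

lemma Ltilde_eq:
  assumes "j \<in> S"
  shows "Ltilde j = poly_D C (single j (r j)) + (\<Sum>k<r j. poly_D (q j * l j k) (single j k))"
proof -
  have "Ltilde j = (\<Sum>k<Suc (r j). poly_D (q j * l j k) (single j k))"
    by (simp only: Ltilde_def Lop_def weyl_mult_sum_right weyl_mult_poly_D lessThan_Suc_atMost)
  also have "\<dots> = poly_D C (single j (r j)) + (\<Sum>k<r j. poly_D (q j * l j k) (single j k))"
    unfolding sum.lessThan_Suc C_eq[OF assms, symmetric] by (rule add.commute)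
  finally show ?thesis .
qed

lemma Ltilde_multiple_in_J: "j \<in> S \<Longrightarrow> in_Wn n w \<Longrightarrow> weyl_mult w (Ltilde j) \<in> J"
  unfolding J_def using finite_S by (rule left_ideal_gen_multiple)

lemma reduce_monomial:
  assumes a: "keys a \<subseteq> {1..n}" "mdeg a \<le> t" and \<beta>: "keys \<beta> \<subseteq> S"
    and j: "j \<in> S" "r j \<le> lookup \<beta> j"
  obtains w R where "in_Wn n w" "R \<in> Hcal n S r (t + dC) (int (mdeg \<beta>) - 1)"
    "weyl_mult (poly_to_weyl C) (single (a, \<beta>) s) = weyl_mult w (Ltilde j) + R"
proof
  define e where "e = single j (r j)"
  define \<gamma> where "\<gamma> = \<beta> - e"
  have e: "keys e \<subseteq> S" "lookup e i \<le> lookup \<beta> i" for i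
    using j by (auto simp: e_def lookup_single when_def)
  then have \<beta>_eq: "\<beta> = \<gamma> + e"
    unfolding \<gamma>_def by (simp add: monom_diff_add)
  have \<gamma>: "keys \<gamma> \<subseteq> S" "mdeg \<gamma> + r j = mdeg \<beta>"
    using \<beta> keys_monom_diff[of \<beta> e] \<beta>_eq by (auto simp: e_def mdeg_add)
  define w where "w = single (a, \<gamma>) s"
  show "in_Wn n w"
    unfolding w_def using a \<gamma> S_range by (intro in_Wn_single) auto
  define R1 where "R1 = weyl_mult w (poly_D C e) - weyl_mult (poly_to_weyl C) (single (a, \<beta>) s)"
  define R2 where "R2 = (\<Sum>k<r j. weyl_mult w (poly_D (q j * l j k) (single j k)))"
  have "weyl_mult w (Ltilde j) = weyl_mult w (poly_D C e) + R2"
    unfolding Ltilde_eq[OF j(1)] R2_def e_def weyl_mult_add_right weyl_mult_sum_right ..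
  then show "weyl_mult (poly_to_weyl C) (single (a, \<beta>) s) = weyl_mult w (Ltilde j) + (- R1 - R2)"
    unfolding R1_def by (simp add: algebra_simps)
  have "R1 \<in> Hcal n S r (t + dC) (int (mdeg \<beta>) - 1)"
    unfolding R1_def w_def \<beta>_eq
    using a C_poly tdeg_C_le \<gamma>(1) e(1) by (rule single_times_poly_D_lower_order_in_Hcal)
  moreover have "R2 \<in> Hcal n S r (t + dC) (int (mdeg \<beta>) - 1)"
    unfolding R2_def
  proof (rule Hcal_sum)
    fix k assume k: "k \<in> {..<r j}"
    then have "int (mdeg (\<gamma> + single j k)) \<le> int (mdeg \<beta>) - 1"
      using \<gamma>(2) by (simp add: mdeg_add)
    moreover have "weyl_mult w (poly_D (q j * l j k) (single j k))
        \<in> Hcal n S r (t + dC) (int (mdeg (\<gamma> + single j k)))"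
      unfolding w_def using a Ltilde_coeff[OF j(1)] k \<gamma>(1) j(1)
      by (intro single_times_poly_D_in_Hcal) auto
    ultimately show "weyl_mult w (poly_D (q j * l j k) (single j k))
        \<in> Hcal n S r (t + dC) (int (mdeg \<beta>) - 1)"
      using Hcal_mono by blast
  qed
  ultimately show "- R1 - R2 \<in> Hcal n S r (t + dC) (int (mdeg \<beta>) - 1)"
    using Hcal_diff Hcal_zero by (metis diff_0)
qed

lemma J_zero: "0 \<in> J"
  unfolding J_def by (rule left_ideal_gen_zero)

lemma J_subset_Hcal_plus_J: "J \<subseteq> Hcal n S r t 0 + J"
  using Hcal_zero by (metis add_0 set_plus_intro subsetI)

lemma Hcal_subset_Hcal_plus_J: "Hcal n S r t 0 \<subseteq> Hcal n S r t 0 + J"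
  using J_zero by (metis add_0_right set_plus_intro subsetI)

lemma Hcal_plus_J_add:
  assumes "x \<in> Hcal n S r t 0 + J" "y \<in> Hcal n S r t 0 + J"
  shows "x + y \<in> Hcal n S r t 0 + J"
proof -
  obtain h g h' g' where "h \<in> Hcal n S r t 0" "g \<in> J" "h' \<in> Hcal n S r t 0" "g' \<in> J"
    and "x + y = (h + h') + (g + g')"
    using assms by (auto elim!: set_plus_elim simp: ac_simps)
  then show ?thesis
    unfolding J_def by (auto intro: Hcal_add left_ideal_gen_add)
qed

lemma weyl_mult_in_Hcal_plus_J:
  assumes "\<And>x. x \<in> keys h \<Longrightarrow> weyl_mult p (single x (lookup h x)) \<in> Hcal n S r t 0 + J"
  shows "weyl_mult p h \<in> Hcal n S r t 0 + J"
proof -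
  have "0 \<in> Hcal n S r t 0 + J"
    using Hcal_subset_Hcal_plus_J Hcal_zero by blast
  then show ?thesis
    unfolding weyl_mult_eq_sum_right[of _ h] by (rule sum_closed[OF _ Hcal_plus_J_add assms])
qed

lemma C_power_times_Hcal_0:
  assumes "h \<in> Hcal n S r t 0"
  shows "weyl_mult (poly_to_weyl (C ^ u)) h \<in> Hcal n S r (t + u * dC) 0"
proof -
  have "tdeg (C ^ u) \<le> u * dC"
    using poly_weight_power_le[of "\<lambda>_. 1" C u] tdeg_C_le
    by (simp add: tdeg_eq_poly_weight) (meson le_trans mult_le_mono2)
  then show ?thesis
    using poly_times_Hcal[OF is_poly_n_power[OF C_poly] assms, of u]
      Hcal_mono[of "tdeg (C ^ u) + t" "t + u * dC" 0 0] by auto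
qed

lemma C_power_times_monomial_step:
  assumes IH: "\<And>t v h. v \<le> int u \<Longrightarrow> h \<in> Hcal n S r t v \<Longrightarrow>
      weyl_mult (poly_to_weyl (C ^ u)) h \<in> Hcal n S r (t + u * dC) 0 + J"
    and v: "v \<le> int (Suc u)" and mon: "(a, \<beta>) \<in> Hmonomials n S r t v"
  shows "weyl_mult (poly_to_weyl (C ^ Suc u)) (single (a, \<beta>) s) \<in> Hcal n S r (t + Suc u * dC) 0 + J"
proof (cases "(a, \<beta>) \<in> Hmonomials n S r t 0")
  case True
  then show ?thesis
    using C_power_times_Hcal_0[OF single_in_Hcal] Hcal_subset_Hcal_plus_J by blast
next
  case False
  with mon obtain j where a: "keys a \<subseteq> {1..n}" "mdeg a \<le> t"
    and \<beta>: "keys \<beta> \<subseteq> S" "int (mdeg \<beta>) \<le> v" and j: "j \<in> S" "r j \<le> lookup \<beta> j"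
    by (auto simp: Hmonomials_def not_less)
  obtain w R where w: "in_Wn n w" and R: "R \<in> Hcal n S r (t + dC) (int (mdeg \<beta>) - 1)"
    and eq: "weyl_mult (poly_to_weyl C) (single (a, \<beta>) s) = weyl_mult w (Ltilde j) + R"
    using reduce_monomial[OF a \<beta>(1) j] .
  have "weyl_mult (poly_to_weyl (C ^ Suc u)) (single (a, \<beta>) s) =
      weyl_mult (poly_to_weyl (C ^ u)) (weyl_mult w (Ltilde j) + R)"
    unfolding power_Suc2 weyl_mult_poly_to_weyl_mult eq ..
  also have "\<dots> = weyl_mult (weyl_mult (poly_to_weyl (C ^ u)) w) (Ltilde j)
      + weyl_mult (poly_to_weyl (C ^ u)) R"
    by (simp only: weyl_mult_add_right weyl_mult_assoc_poly)
  finally have split: "weyl_mult (poly_to_weyl (C ^ Suc u)) (single (a, \<beta>) s) =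
      weyl_mult (weyl_mult (poly_to_weyl (C ^ u)) w) (Ltilde j)
      + weyl_mult (poly_to_weyl (C ^ u)) R" .
  have "weyl_mult (weyl_mult (poly_to_weyl (C ^ u)) w) (Ltilde j) \<in> J"
    using j w C_poly
    by (intro Ltilde_multiple_in_J in_Wn_weyl_mult in_Wn_poly_to_weyl is_poly_n_power)
  moreover have "weyl_mult (poly_to_weyl (C ^ u)) R \<in> Hcal n S r (t + Suc u * dC) 0 + J"
    using IH[OF _ R] v \<beta>(2) by (simp add: add.assoc)
  ultimately show ?thesis
    unfolding split using Hcal_plus_J_add[OF J_subset_Hcal_plus_J[THEN subsetD]] by blast
qed

theorem C_power_times_Hcal:
  assumes "v \<le> int u" "h \<in> Hcal n S r t v"
  shows "weyl_mult (poly_to_weyl (C ^ u)) h \<in> Hcal n S r (t + u * dC) 0 + J"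
  using assms
proof (induction u arbitrary: t v h)
  case 0
  then have "h \<in> Hcal n S r t 0"
    using Hcal_mono[of t t v 0] by auto
  then show ?case
    using C_power_times_Hcal_0 Hcal_subset_Hcal_plus_J by blast
next
  case (Suc u)
  show ?case
  proof (rule weyl_mult_in_Hcal_plus_J)
    fix x assume "x \<in> keys h"
    then obtain a \<beta> where "x = (a, \<beta>)" "(a, \<beta>) \<in> Hmonomials n S r t v"
      using Suc.prems(2) by (cases x) (auto simp: Hcal_iff_keys)
    then show "weyl_mult (poly_to_weyl (C ^ Suc u)) (single x (lookup h x))
        \<in> Hcal n S r (t + Suc u * dC) 0 + J"
      using C_power_times_monomial_step[OF _ Suc.prems(1)] Suc.IH by blast
  qed
qed

end

theorem lemma3p13:
  fixes n :: nat and S :: "nat set" and r :: "nat \<Rightarrow> nat"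
    and l :: "nat \<Rightarrow> nat \<Rightarrow> 'k::field_char_0 mpoly" and C :: "'k mpoly"
  assumes S: "S \<subseteq> {1..n}" "S \<noteq> {}"
    and lpoly: "\<And>j k. j \<in> S \<Longrightarrow> k \<le> r j \<Longrightarrow> is_poly_n n (l j k)"
    and lead: "\<And>j. j \<in> S \<Longrightarrow> l j (r j) \<noteq> 0"
    and C: "is_lcm_n n C S (\<lambda>j. l j (r j))"
  defines "dC \<equiv> (\<Sum>j\<in>S. Max ((\<lambda>k. tdeg (l j k)) ` {..r j}))"
    and "J \<equiv> left_ideal_gen n S (\<lambda>j. weyl_mult (poly_to_weyl (poly_quot C (l j (r j)))) (Lop l r j))"
  shows "(\<forall>u t (v::int). v \<le> int u \<longrightarrow>
            (\<forall>h\<in>Hcal n S r t v. \<exists>h'\<in>Hcal n S r (t + u * dC) 0. \<exists>g\<in>J.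
               weyl_mult (poly_to_weyl (C ^ u)) h = h' + g))
       \<and> (\<forall>\<alpha>::nat \<Rightarrow>\<^sub>0 nat. Poly_Mapping.keys \<alpha> \<subseteq> S \<longrightarrow>
            (\<exists>h'\<in>Hcal n S r (mdeg \<alpha> * dC) 0. \<exists>g\<in>J.
               weyl_mult (poly_to_weyl (C ^ mdeg \<alpha>)) (Poly_Mapping.single (0, \<alpha>) 1) = h' + g))"
proof -
  interpret L: normalized_operators n S r l C
    using S(1) lpoly lead C by unfold_locales
  have reduction: "weyl_mult (poly_to_weyl (C ^ u)) h \<in> Hcal n S r (t + u * dC) 0 + J"
    if "v \<le> int u" "h \<in> Hcal n S r t v" for u t v h
    using L.C_power_times_Hcal[OF that]
    unfolding dC_def J_def L.dC_def L.d_def L.J_def L.Ltilde_def L.q_def .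
  show ?thesis
  proof (intro conjI allI impI ballI)
    fix u t and v :: int and h :: "'k weyl"
    assume "v \<le> int u" "h \<in> Hcal n S r t v"
    from reduction[OF this] show "\<exists>h'\<in>Hcal n S r (t + u * dC) 0. \<exists>g\<in>J.
        weyl_mult (poly_to_weyl (C ^ u)) h = h' + g"
      by (simp add: set_plus_def)
  next
    fix \<alpha> :: monom
    assume "keys \<alpha> \<subseteq> S"
    then have "single (0, \<alpha>) 1 \<in> Hcal n S r 0 (int (mdeg \<alpha>))"
      by (simp add: Hcal_def mdeg_eq_0_iff)
    from reduction[OF order_refl this] show "\<exists>h'\<in>Hcal n S r (mdeg \<alpha> * dC) 0. \<exists>g\<in>J.
        weyl_mult (poly_to_weyl (C ^ mdeg \<alpha>)) (single (0, \<alpha>) 1) = h' + g"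
      by (simp add: set_plus_def)
  qed
qed

end
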